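(* Let $u>0$, $\Delta t,\Delta x>0$ with $\nu=u\Delta t/\Delta x\in(0,1]$. Let $a,b\in\mathbb R$, $x_0\in\mathbb R$, and let $c^{\rm ini}(x)=a$ for $x<x_0$ and $c^{\rm ini}(x)=b$ for $x>x_0$. Set $c_j^0=\frac1{\Delta x}\int_{(j-1/2)\Delta x}^{(j+1/2)\Delta x}c^{\rm ini}(x)\,dx$ and, for $n\ge0$, $c_j^{n+1}=c_j^n-\nu(c_{j+1/2}^n-c_{j-1/2}^n)$, where $c^n_{j+1/2}=\min(\max(\omega_{j+1/2},c_{j+1}^n),\Omega_{j+1/2})$ is the limited downwind flux computed from $(c^n_j)_j$. Then for all $n\ge0$ and $j\in\mathbb Z$, $$c_j^n=\frac1{\Delta x}\int_{(j-1/2)\Delta x}^{(j+1/2)\Delta x}c^{\rm ini}(x-un\Delta t)\,dx,$$ i.e. the scheme computes exactly the cell averages of the exact solution $c(t,x)=c^{\rm ini}(x-ut)$.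
   Context: Limited downwind flux: given $(c_j^n)_j$, let $m_{j+1/2}=\min(c_j^n,c_{j+1}^n)$, $M_{j+1/2}=\max(c_j^n,c_{j+1}^n)$, $\lambda_{j+1/2}=\frac1\nu(c_j^n-M_{j-1/2})+M_{j-1/2}$, $\Lambda_{j+1/2}=\frac1\nu(c_j^n-m_{j-1/2})+m_{j-1/2}$, and $[\omega_{j+1/2},\Omega_{j+1/2}]=[\lambda_{j+1/2},\Lambda_{j+1/2}]\cap[m_{j+1/2},M_{j+1/2}]$ (nonempty since it contains $c_j^n$ when $0<\nu\le1$). *)

theory Defs
  imports "HOL-Analysis.Analysis"
begin

text \<open>A grid function c :: int \<Rightarrow> real represents (c_j)_j. Interface index j+1/2 is
encoded by the integer j.\<close>

definition lo_if :: "(int \<Rightarrow> real) \<Rightarrow> int \<Rightarrow> real" where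
  "lo_if c j = min (c j) (c (j + 1))"

definition hi_if :: "(int \<Rightarrow> real) \<Rightarrow> int \<Rightarrow> real" where
  "hi_if c j = max (c j) (c (j + 1))"

definition lam_if :: "real \<Rightarrow> (int \<Rightarrow> real) \<Rightarrow> int \<Rightarrow> real" where
  "lam_if \<nu> c j = (1 / \<nu>) * (c j - hi_if c (j - 1)) + hi_if c (j - 1)"

definition Lam_if :: "real \<Rightarrow> (int \<Rightarrow> real) \<Rightarrow> int \<Rightarrow> real" where
  "Lam_if \<nu> c j = (1 / \<nu>) * (c j - lo_if c (j - 1)) + lo_if c (j - 1)"

definition omega_if :: "real \<Rightarrow> (int \<Rightarrow> real) \<Rightarrow> int \<Rightarrow> real" where
  "omega_if \<nu> c j = max (lam_if \<nu> c j) (lo_if c j)"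

definition Omega_if :: "real \<Rightarrow> (int \<Rightarrow> real) \<Rightarrow> int \<Rightarrow> real" where
  "Omega_if \<nu> c j = min (Lam_if \<nu> c j) (hi_if c j)"

definition ld_flux :: "real \<Rightarrow> (int \<Rightarrow> real) \<Rightarrow> int \<Rightarrow> real" where
  "ld_flux \<nu> c j = min (max (omega_if \<nu> c j) (c (j + 1))) (Omega_if \<nu> c j)"

definition ld_step :: "real \<Rightarrow> (int \<Rightarrow> real) \<Rightarrow> int \<Rightarrow> real" where
  "ld_step \<nu> c j = c j - \<nu> * (ld_flux \<nu> c j - ld_flux \<nu> c (j - 1))"

definition cell_avg :: "real \<Rightarrow> (real \<Rightarrow> real) \<Rightarrow> int \<Rightarrow> real" where
  "cell_avg dx f j = (1 / dx) * integral {(real_of_int j - 1/2) * dx .. (real_of_int j + 1/2) * dx} f"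

end

theory Submission
  imports Defs
begin

text \<open>Cell averages of a step function with values a and b are the affine images
b + (a - b) s_q of the profile s_q of cell averages of the indicator of x < q, where q is the
position of the front in cell units. The scheme commutes with all affine maps of the data; for
negative slopes this holds because \<omega> \<le> c_j \<le> \<Omega> when 0 < \<nu> \<le> 1, so the flux is a genuine
clamp of c_{j+1} to [\<omega>, \<Omega>], and negation exchanges \<omega> and \<Omega>. So it suffices to treat s_q, and on s_q
the limited downwind flux equals the exact time-averaged flux of the moving front, so one step
maps s_q to s_{q+\<nu>}.\<close>

lemma lo_if_affine: "0 \<le> \<beta> \<Longrightarrow> lo_if (\<lambda>i. \<alpha> + \<beta> * c i) j = \<alpha> + \<beta> * lo_if c j"
  by (simp add: lo_if_def min_add_distrib_right min_mult_distrib_left)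

lemma hi_if_affine: "0 \<le> \<beta> \<Longrightarrow> hi_if (\<lambda>i. \<alpha> + \<beta> * c i) j = \<alpha> + \<beta> * hi_if c j"
  by (simp add: hi_if_def max_add_distrib_right max_mult_distrib_left)

lemma lam_if_affine: "0 \<le> \<beta> \<Longrightarrow> lam_if v (\<lambda>i. \<alpha> + \<beta> * c i) j = \<alpha> + \<beta> * lam_if v c j"
  by (simp add: lam_if_def hi_if_affine algebra_simps)

lemma Lam_if_affine: "0 \<le> \<beta> \<Longrightarrow> Lam_if v (\<lambda>i. \<alpha> + \<beta> * c i) j = \<alpha> + \<beta> * Lam_if v c j"
  by (simp add: Lam_if_def lo_if_affine algebra_simps)

lemma ld_flux_affine_nonneg:
  "0 \<le> \<beta> \<Longrightarrow> ld_flux v (\<lambda>i. \<alpha> + \<beta> * c i) j = \<alpha> + \<beta> * ld_flux v c j"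
  by (simp add: ld_flux_def omega_if_def Omega_if_def lam_if_affine Lam_if_affine lo_if_affine
      hi_if_affine max_add_distrib_right min_add_distrib_right max_mult_distrib_left min_mult_distrib_left)

lemma lam_if_uminus: "lam_if v (\<lambda>i. - c i) j = - Lam_if v c j"
  by (simp add: lam_if_def Lam_if_def hi_if_def lo_if_def minus_min_eq_max[symmetric] algebra_simps)

lemma Lam_if_uminus: "Lam_if v (\<lambda>i. - c i) j = - lam_if v c j"
  by (simp add: lam_if_def Lam_if_def hi_if_def lo_if_def minus_max_eq_min[symmetric] algebra_simps)

lemma omega_if_uminus: "omega_if v (\<lambda>i. - c i) j = - Omega_if v c j"
  by (simp add: omega_if_def Omega_if_def lam_if_uminus lo_if_def hi_if_def minus_min_eq_max)

lemma Omega_if_uminus: "Omega_if v (\<lambda>i. - c i) j = - omega_if v c j"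
  by (simp add: omega_if_def Omega_if_def Lam_if_uminus lo_if_def hi_if_def minus_max_eq_min)

lemma
  assumes "0 < v" "v \<le> 1"
  shows lam_if_le: "lam_if v c j \<le> c j" and Lam_if_ge: "c j \<le> Lam_if v c j"
proof -
  have "0 \<le> 1 / v - 1" using assms by simp
  moreover have "lam_if v c j = c j + (1 / v - 1) * (c j - hi_if c (j - 1))"
    and "Lam_if v c j = c j + (1 / v - 1) * (c j - lo_if c (j - 1))"
    by (simp_all add: lam_if_def Lam_if_def algebra_simps)
  moreover have "lo_if c (j - 1) \<le> c j" "c j \<le> hi_if c (j - 1)"
    by (simp_all add: lo_if_def hi_if_def)
  ultimately show "lam_if v c j \<le> c j" "c j \<le> Lam_if v c j"
    by (simp_all add: mult_nonneg_nonpos)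
qed

lemma omega_if_le_Omega_if:
  assumes "0 < v" "v \<le> 1"
  shows "omega_if v c j \<le> c j" "c j \<le> Omega_if v c j"
  using lam_if_le[OF assms] Lam_if_ge[OF assms]
  by (simp_all add: omega_if_def Omega_if_def lo_if_def hi_if_def)

lemma ld_flux_uminus:
  assumes "0 < v" "v \<le> 1"
  shows "ld_flux v (\<lambda>i. - c i) j = - ld_flux v c j"
  using omega_if_le_Omega_if[OF assms, of c j]
  by (auto simp: ld_flux_def omega_if_uminus Omega_if_uminus min_def max_def)

lemma ld_flux_affine:
  assumes "0 < v" "v \<le> 1"
  shows "ld_flux v (\<lambda>i. \<alpha> + \<beta> * c i) j = \<alpha> + \<beta> * ld_flux v c j"
proof (cases "0 \<le> \<beta>")
  case True
  then show ?thesis by (rule ld_flux_affine_nonneg)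
next
  case False
  then have "ld_flux v (\<lambda>i. \<alpha> + \<beta> * c i) j = \<alpha> + (- \<beta>) * ld_flux v (\<lambda>i. - c i) j"
    using ld_flux_affine_nonneg[of "- \<beta>" v \<alpha> "\<lambda>i. - c i" j] by simp
  then show ?thesis by (simp add: ld_flux_uminus[OF assms])
qed

lemma ld_step_affine:
  assumes "0 < v" "v \<le> 1"
  shows "ld_step v (\<lambda>i. \<alpha> + \<beta> * c i) j = \<alpha> + \<beta> * ld_step v c j"
  by (simp add: ld_step_def ld_flux_affine[OF assms] algebra_simps)

lemma ld_flux_flat:
  assumes "0 < v" "v \<le> 1" and "c (j - 1) = c j \<or> c (j + 1) = c j"
  shows "ld_flux v c j = c j"
  using omega_if_le_Omega_if[OF assms(1,2), of c j] assms(3)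
  by (auto simp: ld_flux_def omega_if_def Omega_if_def lam_if_def Lam_if_def lo_if_def hi_if_def)

definition ramp :: "real \<Rightarrow> real" where
  "ramp t = min 1 (max 0 t)"

text \<open>Averages over the cells [j - 1/2, j + 1/2] of the indicator of x < q.\<close>
definition step_avg :: "real \<Rightarrow> int \<Rightarrow> real" where
  "step_avg q j = ramp (q - real_of_int j + 1/2)"

text \<open>Fraction of the time step during which the interface j + 1/2 lies behind the front
moving from q to q + v.\<close>
definition front_flux :: "real \<Rightarrow> real \<Rightarrow> int \<Rightarrow> real" where
  "front_flux v q j = ramp ((q + v - (real_of_int j + 1/2)) / v)"

lemma ramp_transport:
  assumes "0 < v" "v \<le> 1"
  shows "ramp t - v * (ramp ((t - 1 + v) / v) - ramp ((t + v) / v)) = ramp (t + v)"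
proof -
  have q: "(t + v) / v = t / v + 1" "(t - 1 + v) / v = (t - 1) / v + 1"
    and c: "v * (t / v) = t" "v * ((t - 1) / v) = t - 1"
    using assms by (simp_all add: field_simps)
  consider "t \<le> -v" | "-v \<le> t" "t \<le> 0" | "0 \<le> t" "t \<le> 1 - v" | "1 - v \<le> t" "t \<le> 1" | "1 \<le> t"
    by linarith
  then show ?thesis
  proof cases
    case 1
    then have "t / v \<le> -1" "(t - 1) / v \<le> -1" using assms by (simp_all add: divide_le_eq)
    with 1 assms show ?thesis unfolding q ramp_def by simp
  next
    case 2
    then have "-1 \<le> t / v" "t / v \<le> 0" "(t - 1) / v \<le> -1"
      using assms by (simp_all add: le_divide_eq divide_le_eq)
    with 2 assms c show ?thesis unfolding q ramp_def by (simp add: algebra_simps)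
  next
    case 3
    then have "0 \<le> t / v" "(t - 1) / v \<le> -1" using assms by (simp_all add: divide_le_eq)
    with 3 assms show ?thesis unfolding q ramp_def by simp
  next
    case 4
    then have "0 \<le> t / v" "-1 \<le> (t - 1) / v" "(t - 1) / v \<le> 0"
      using assms by (simp_all add: le_divide_eq divide_le_eq)
    with 4 assms c show ?thesis unfolding q ramp_def by (simp add: algebra_simps)
  next
    case 5
    then have "0 \<le> t / v" "0 \<le> (t - 1) / v" using assms by simp_all
    with 5 assms show ?thesis unfolding q ramp_def by simp
  qed
qed

lemma ld_flux_step_avg:
  assumes "0 < v" "v \<le> 1"
  shows "ld_flux v (step_avg q) j = front_flux v q j"
proof -
  define t where "t = q - real_of_int j + 1/2"
  have vals: "step_avg q (j - 1) = ramp (t + 1)" "step_avg q j = ramp t"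
    "step_avg q (j + 1) = ramp (t - 1)"
    and flux: "front_flux v q j = ramp ((t - 1 + v) / v)"
    by (simp_all add: step_avg_def front_flux_def t_def algebra_simps)
  consider "t \<le> 0" | "0 \<le> t" "t \<le> 1" | "1 \<le> t" by linarith
  then show ?thesis
  proof cases
    case 1
    then have "(t - 1 + v) / v \<le> 0" using assms by (simp add: divide_le_0_iff)
    with 1 show ?thesis
      using ld_flux_flat[OF assms, of "step_avg q" j] by (simp add: vals flux ramp_def)
  next
    case 2
    have "(t - 1 + v) / v = (t - 1) / v + 1" using assms by (simp add: field_simps)
    moreover have "(t - 1) / v \<le> t - 1"
      using assms 2 mult_left_mono_neg[of v 1 "t - 1"] by (simp add: divide_le_eq)
    ultimately show ?thesis using 2
      by (simp add: ld_flux_def omega_if_def Omega_if_def lam_if_def Lam_if_def lo_if_def hi_if_def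
          vals flux ramp_def)
  next
    case 3
    then have "1 \<le> (t - 1 + v) / v" using assms by simp
    with 3 show ?thesis
      using ld_flux_flat[OF assms, of "step_avg q" j] by (simp add: vals flux ramp_def)
  qed
qed

lemma ld_step_step_avg:
  assumes "0 < v" "v \<le> 1"
  shows "ld_step v (step_avg q) j = step_avg (q + v) j"
proof -
  define t where "t = q - real_of_int j + 1/2"
  have "front_flux v q j = ramp ((t - 1 + v) / v)" "front_flux v q (j - 1) = ramp ((t + v) / v)"
    "step_avg q j = ramp t" "step_avg (q + v) j = ramp (t + v)"
    by (simp_all add: front_flux_def step_avg_def t_def algebra_simps)
  then show ?thesis
    by (simp add: ld_step_def ld_flux_step_avg[OF assms] ramp_transport[OF assms])
qed

lemma has_integral_step_function:
  fixes g :: "real \<Rightarrow> real"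
  assumes "l \<le> r" and left: "\<And>x. x < p \<Longrightarrow> g x = a" and right: "\<And>x. x > p \<Longrightarrow> g x = b"
  defines "m \<equiv> max l (min p r)"
  shows "(g has_integral a * (m - l) + b * (r - m)) {l..r}"
proof -
  have lm: "l \<le> m" "m \<le> r" unfolding m_def using assms(1) by auto
  have "(g has_integral a * (m - l)) {l..m}"
  proof (rule has_integral_spike_finite[where S = "{m}" and f = "\<lambda>x. a"])
    show "((\<lambda>x. a) has_integral a * (m - l)) {l..m}"
      using has_integral_const_real[of a l m] lm by (simp add: mult.commute)
    show "g x = a" if "x \<in> {l..m} - {m}" for x
      using that left unfolding m_def by auto
  qed simp
  moreover have "(g has_integral b * (r - m)) {m..r}"
  proof (rule has_integral_spike_finite[where S = "{m}" and f = "\<lambda>x. b"])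
    show "((\<lambda>x. b) has_integral b * (r - m)) {m..r}"
      using has_integral_const_real[of b m r] lm by (simp add: mult.commute)
    show "g x = b" if "x \<in> {m..r} - {m}" for x
      using that right unfolding m_def by auto
  qed simp
  ultimately show ?thesis by (rule has_integral_combine[OF lm])
qed

lemma clamp_eq_ramp:
  assumes "l < r"
  shows "max l (min p r) - l = (r - l) * ramp ((p - l) / (r - l))"
proof -
  consider "p \<le> l" | "l \<le> p" "p \<le> r" | "r \<le> p" by linarith
  then show ?thesis
  proof cases
    case 1
    then have "(p - l) / (r - l) \<le> 0" using assms by (simp add: divide_le_0_iff)
    with 1 assms show ?thesis by (simp add: ramp_def)
  next
    case 2
    then have "0 \<le> (p - l) / (r - l)" "(p - l) / (r - l) \<le> 1" using assms by simp_all
    with 2 assms show ?thesis by (simp add: ramp_def)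
  next
    case 3
    then have "1 \<le> (p - l) / (r - l)" using assms by simp
    with 3 assms show ?thesis by (simp add: ramp_def)
  qed
qed

lemma cell_avg_step_function:
  fixes g :: "real \<Rightarrow> real"
  assumes "dx > 0" and "\<And>x. x < p \<Longrightarrow> g x = a" and "\<And>x. x > p \<Longrightarrow> g x = b"
  shows "cell_avg dx g j = b + (a - b) * step_avg (p / dx) j"
proof -
  define l where "l = (real_of_int j - 1/2) * dx"
  define m where "m = max l (min p (l + dx))"
  have "(g has_integral a * (m - l) + b * (l + dx - m)) {l..l + dx}"
    unfolding m_def using assms by (intro has_integral_step_function) auto
  moreover have "(real_of_int j + 1/2) * dx = l + dx" by (simp add: l_def algebra_simps)
  ultimately have "cell_avg dx g j = (a * (m - l) + b * (l + dx - m)) / dx"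
    by (simp add: cell_avg_def integral_unique flip: l_def)
  also have "\<dots> = b + (a - b) * ((m - l) / dx)"
    using assms(1) by (simp add: field_simps)
  also have "(m - l) / dx = step_avg (p / dx) j"
    using clamp_eq_ramp[of l "l + dx" p] assms(1)
    by (simp add: m_def step_avg_def l_def field_simps)
  finally show ?thesis .
qed

theorem mainTheorem4:
  fixes u dt dx \<nu> a b x0 :: real
    and cini :: "real \<Rightarrow> real"
    and c :: "nat \<Rightarrow> int \<Rightarrow> real"
  assumes "u > 0" and "dt > 0" and "dx > 0"
    and "\<nu> = u * dt / dx" and "0 < \<nu>" and "\<nu> \<le> 1"
    and "\<And>x. x < x0 \<Longrightarrow> cini x = a"
    and "\<And>x. x > x0 \<Longrightarrow> cini x = b"
    and "\<And>j. c 0 j = cell_avg dx cini j"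
    and "\<And>n j. c (Suc n) j = ld_step \<nu> (c n) j"
  shows "\<forall>n j. c n j = cell_avg dx (\<lambda>x. cini (x - u * real n * dt)) j"
proof -
  define s where "s n = (\<lambda>j. b + (a - b) * step_avg (x0 / dx + real n * \<nu>) j)" for n
  have exact: "cell_avg dx (\<lambda>x. cini (x - u * real n * dt)) j = s n j" for n j
  proof -
    have "(x0 + u * real n * dt) / dx = x0 / dx + real n * \<nu>"
      using assms(3,4) by (simp add: field_simps)
    moreover have "cell_avg dx (\<lambda>x. cini (x - u * real n * dt)) j
        = b + (a - b) * step_avg ((x0 + u * real n * dt) / dx) j"
      by (rule cell_avg_step_function) (use assms(3,7,8) in auto)
    ultimately show ?thesis by (simp add: s_def)
  qed
  have "c n = s n" for n
  proof (induction n)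
    case 0
    then show ?case using assms(9) exact[of 0] by auto
  next
    case (Suc n)
    have "c (Suc n) j = ld_step \<nu> (s n) j" for j
      using assms(10) Suc by simp
    also have "\<dots> j = s (Suc n) j" for j
      unfolding s_def ld_step_affine[OF assms(5,6)] ld_step_step_avg[OF assms(5,6)]
      by (simp add: algebra_simps)
    finally show ?case by auto
  qed
  then show ?thesis by (simp add: exact)
qed

end
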